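(* Let $\Theta\subseteq\mathbb{R}$ be an interval (the parameter space), $X$ a sample space, and let $p(x\mid\theta)>0$ for all $x\in X$, $\theta\in\Theta$ be the sampling probability (or density) of $x$ given $\theta$. Suppose that to every single observation $x\in X$ a probability density $f(\theta\mid x)$ on $\Theta$ is assigned, and that a second, independent observation $x_2$ is taken into account by Bayes' rule, $$f(\theta\mid x_1x_2)=\frac{f(\theta\mid x_1)\,p(x_2\mid\theta)}{\int_\Theta f(\theta'\mid x_1)\,p(x_2\mid\theta')\,d\theta'} ,$$ where the denominators are finite and positive. Then the following are equivalent: (i) the result is invariant under reversing the order of the two observations, i.e. for all $x_1,x_2\in X$ and all $\theta\in\Theta$, $$\frac{f(\theta\mid x_1)\,p(x_2\mid\theta)}{\int_\Theta f(\theta'\mid x_1)\,p(x_2\mid\theta')\,d\theta'}=\frac{f(\theta\mid x_2)\,p(x_1\mid\theta)}{\int_\Theta f(\theta'\mid x_2)\,p(x_1\mid\theta')\,d\theta'} ;$$ (ii) there exists a nonnegative function $\pi$ on $\Theta$ (independent of $x$) such that for every $x\in X$, $\int_\Theta \pi(\theta')p(x\mid\theta')\,d\theta'\in(0,\infty)$ and $$f(\theta\mid x)=\frac{\pi(\theta)\,p(x\mid\theta)}{\int_\Theta\pi(\theta')\,p(x\mid\theta')\,d\theta'}\quad\text{for all }\theta\in\Theta .$$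
   Context: The function $\pi$ in (ii) is called the consistency factor; it is only a proportionality coefficient and is not required to be integrable over $\Theta$. *)

theory Defs
  imports "HOL-Analysis.Analysis"
begin

definition prob_density_on :: "real set \<Rightarrow> (real \<Rightarrow> real) \<Rightarrow> bool" where
  "prob_density_on \<Theta> g \<longleftrightarrow>
     (\<forall>\<theta>\<in>\<Theta>. 0 \<le> g \<theta>) \<and> set_integrable lborel \<Theta> g \<and> (LINT \<theta>:\<Theta>|lborel. g \<theta>) = 1"

definition bayes_update ::
  "real set \<Rightarrow> ('x \<Rightarrow> real \<Rightarrow> real) \<Rightarrow> ('x \<Rightarrow> real \<Rightarrow> real) \<Rightarrow> 'x \<Rightarrow> 'x \<Rightarrow> real \<Rightarrow> real" where
  "bayes_update \<Theta> f p x1 x2 \<theta> =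
     f x1 \<theta> * p x2 \<theta> / (LINT \<theta>':\<Theta>|lborel. f x1 \<theta>' * p x2 \<theta>')"

end

theory Submission
  imports Defs
begin

text \<open>
  If all posteriors are proportional to a common factor \<pi> times the likelihood, the
  two-step update is \<pi> p(x1|.) p(x2|.) normalized, which is symmetric in x1 and x2.
  Conversely, commutativity applied to an arbitrary observation x and a fixed reference
  observation x0 shows that f(.|x) is a positive multiple of \<pi> p(x|.) with
  \<pi> = f(.|x0) / p(x0|.); since f(.|x) integrates to 1, the multiple is the normalizing
  constant.
\<close>

lemma set_lebesgue_integral_cong_on:
  assumes "\<And>x. x \<in> A \<Longrightarrow> f x = g x"
  shows "(LINT x:A|M. f x) = (LINT x:A|M. g x)"
proof -
  have "(\<lambda>x. indicator A x *\<^sub>R f x) = (\<lambda>x. indicator A x *\<^sub>R g x)"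
    by (rule ext) (auto simp: indicator_def assms)
  then show ?thesis
    unfolding set_lebesgue_integral_def by simp
qed

lemma prob_density_on_scaled:
  fixes g h :: "real \<Rightarrow> real"
  assumes "prob_density_on \<Theta> g" and "0 < c"
    and h: "\<And>\<theta>. \<theta> \<in> \<Theta> \<Longrightarrow> h \<theta> = c * g \<theta>"
  shows "set_integrable lborel \<Theta> h"
    and "(LINT \<theta>:\<Theta>|lborel. h \<theta>) = c"
    and "\<And>\<theta>. \<theta> \<in> \<Theta> \<Longrightarrow> g \<theta> = h \<theta> / (LINT \<theta>':\<Theta>|lborel. h \<theta>')"
proof -
  have g: "set_integrable lborel \<Theta> g" "(LINT \<theta>:\<Theta>|lborel. g \<theta>) = 1"
    using assms(1) by (auto simp: prob_density_on_def)
  show "set_integrable lborel \<Theta> h"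
    using g(1) by (simp add: set_integrable_cong[OF refl refl h])
  show integral: "(LINT \<theta>:\<Theta>|lborel. h \<theta>) = c"
    using g(2) by (simp add: set_lebesgue_integral_cong_on[OF h])
  show "g \<theta> = h \<theta> / (LINT \<theta>':\<Theta>|lborel. h \<theta>')" if "\<theta> \<in> \<Theta>" for \<theta>
    using \<open>0 < c\<close> by (simp add: integral h[OF that])
qed

lemma bayes_update_proportional:
  fixes \<pi> :: "real \<Rightarrow> real"
  assumes f: "\<And>\<theta>. \<theta> \<in> \<Theta> \<Longrightarrow> f x1 \<theta> = \<pi> \<theta> * p x1 \<theta> / (LINT \<theta>':\<Theta>|lborel. \<pi> \<theta>' * p x1 \<theta>')"
    and pos: "0 < (LINT \<theta>:\<Theta>|lborel. \<pi> \<theta> * p x1 \<theta>)"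
    and "\<theta> \<in> \<Theta>"
  \<comment> \<open>No integrability is needed: if the integral on the right is 0, both sides are 0.\<close>
  shows "bayes_update \<Theta> f p x1 x2 \<theta> =
           \<pi> \<theta> * p x1 \<theta> * p x2 \<theta> / (LINT \<theta>':\<Theta>|lborel. \<pi> \<theta>' * p x1 \<theta>' * p x2 \<theta>')"
proof -
  define Z where "Z = (LINT \<theta>:\<Theta>|lborel. \<pi> \<theta> * p x1 \<theta>)"
  have "(LINT \<theta>:\<Theta>|lborel. f x1 \<theta> * p x2 \<theta>) =
          (LINT \<theta>:\<Theta>|lborel. inverse Z * (\<pi> \<theta> * p x1 \<theta> * p x2 \<theta>))"
    by (rule set_lebesgue_integral_cong_on) (simp add: f Z_def field_simps)
  then show ?thesis
    using pos \<open>\<theta> \<in> \<Theta>\<close> by (simp add: bayes_update_def f Z_def[symmetric] field_simps)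
qed

lemma bayes_update_commute_imp_proportional:
  assumes p_pos: "\<And>x \<theta>. x \<in> X \<Longrightarrow> \<theta> \<in> \<Theta> \<Longrightarrow> 0 < p x \<theta>"
    and f_dens: "\<And>x. x \<in> X \<Longrightarrow> prob_density_on \<Theta> (f x)"
    and denom_pos: "\<And>x1 x2. x1 \<in> X \<Longrightarrow> x2 \<in> X \<Longrightarrow>
                      0 < (LINT \<theta>:\<Theta>|lborel. f x1 \<theta> * p x2 \<theta>)"
    and commute: "\<forall>x1\<in>X. \<forall>x2\<in>X. \<forall>\<theta>\<in>\<Theta>.
                    bayes_update \<Theta> f p x1 x2 \<theta> = bayes_update \<Theta> f p x2 x1 \<theta>"
    and "x0 \<in> X"
  defines "\<pi> \<equiv> \<lambda>\<theta>. f x0 \<theta> / p x0 \<theta>"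
  shows "\<forall>\<theta>\<in>\<Theta>. 0 \<le> \<pi> \<theta>"
    and "\<forall>x\<in>X. set_integrable lborel \<Theta> (\<lambda>\<theta>. \<pi> \<theta> * p x \<theta>) \<and>
                0 < (LINT \<theta>:\<Theta>|lborel. \<pi> \<theta> * p x \<theta>) \<and>
                (\<forall>\<theta>\<in>\<Theta>. f x \<theta> = \<pi> \<theta> * p x \<theta> / (LINT \<theta>':\<Theta>|lborel. \<pi> \<theta>' * p x \<theta>'))"
proof -
  show "\<forall>\<theta>\<in>\<Theta>. 0 \<le> \<pi> \<theta>"
    using f_dens[OF \<open>x0 \<in> X\<close>] p_pos[OF \<open>x0 \<in> X\<close>]
    by (simp add: prob_density_on_def \<pi>_def less_imp_le)
  show "\<forall>x\<in>X. set_integrable lborel \<Theta> (\<lambda>\<theta>. \<pi> \<theta> * p x \<theta>) \<and>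
                0 < (LINT \<theta>:\<Theta>|lborel. \<pi> \<theta> * p x \<theta>) \<and>
                (\<forall>\<theta>\<in>\<Theta>. f x \<theta> = \<pi> \<theta> * p x \<theta> / (LINT \<theta>':\<Theta>|lborel. \<pi> \<theta>' * p x \<theta>'))"
  proof (intro ballI conjI)
    fix x assume "x \<in> X"
    define c where
      "c = (LINT \<theta>:\<Theta>|lborel. f x0 \<theta> * p x \<theta>) / (LINT \<theta>:\<Theta>|lborel. f x \<theta> * p x0 \<theta>)"
    have "0 < c"
      using denom_pos \<open>x \<in> X\<close> \<open>x0 \<in> X\<close> by (simp add: c_def)
    have scaled: "\<pi> \<theta> * p x \<theta> = c * f x \<theta>" if "\<theta> \<in> \<Theta>" for \<theta>
    proof -
      have "bayes_update \<Theta> f p x x0 \<theta> = bayes_update \<Theta> f p x0 x \<theta>"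
        using commute \<open>x \<in> X\<close> \<open>x0 \<in> X\<close> that by blast
      then show ?thesis
        using p_pos[OF \<open>x0 \<in> X\<close> that]
          denom_pos[OF \<open>x \<in> X\<close> \<open>x0 \<in> X\<close>] denom_pos[OF \<open>x0 \<in> X\<close> \<open>x \<in> X\<close>]
        by (simp add: bayes_update_def \<pi>_def c_def field_simps)
    qed
    note scaled_density = prob_density_on_scaled[OF f_dens[OF \<open>x \<in> X\<close>] \<open>0 < c\<close>]
    show "set_integrable lborel \<Theta> (\<lambda>\<theta>. \<pi> \<theta> * p x \<theta>)"
      by (rule scaled_density(1)) (rule scaled)
    have "(LINT \<theta>:\<Theta>|lborel. \<pi> \<theta> * p x \<theta>) = c"
      by (rule scaled_density(2)) (rule scaled)
    with \<open>0 < c\<close> show "0 < (LINT \<theta>:\<Theta>|lborel. \<pi> \<theta> * p x \<theta>)"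
      by simp
    show "f x \<theta> = \<pi> \<theta> * p x \<theta> / (LINT \<theta>':\<Theta>|lborel. \<pi> \<theta>' * p x \<theta>')" if "\<theta> \<in> \<Theta>" for \<theta>
      by (rule scaled_density(3)[OF _ that]) (rule scaled)
  qed
qed

theorem mainTheorem1:
  fixes \<Theta> :: "real set" and X :: "'x set"
    and p :: "'x \<Rightarrow> real \<Rightarrow> real" and f :: "'x \<Rightarrow> real \<Rightarrow> real"
  assumes interval: "is_interval \<Theta>"
    and p_pos: "\<And>x \<theta>. x \<in> X \<Longrightarrow> \<theta> \<in> \<Theta> \<Longrightarrow> 0 < p x \<theta>"
    and f_dens: "\<And>x. x \<in> X \<Longrightarrow> prob_density_on \<Theta> (f x)"
    and denom_int: "\<And>x1 x2. x1 \<in> X \<Longrightarrow> x2 \<in> X \<Longrightarrow>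
                      set_integrable lborel \<Theta> (\<lambda>\<theta>. f x1 \<theta> * p x2 \<theta>)"
    and denom_pos: "\<And>x1 x2. x1 \<in> X \<Longrightarrow> x2 \<in> X \<Longrightarrow>
                      0 < (LINT \<theta>:\<Theta>|lborel. f x1 \<theta> * p x2 \<theta>)"
  shows "(\<forall>x1\<in>X. \<forall>x2\<in>X. \<forall>\<theta>\<in>\<Theta>.
             bayes_update \<Theta> f p x1 x2 \<theta> = bayes_update \<Theta> f p x2 x1 \<theta>)
         \<longleftrightarrow>
         (\<exists>\<pi> :: real \<Rightarrow> real. (\<forall>\<theta>\<in>\<Theta>. 0 \<le> \<pi> \<theta>) \<and>
            (\<forall>x\<in>X. set_integrable lborel \<Theta> (\<lambda>\<theta>. \<pi> \<theta> * p x \<theta>) \<and>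
                    0 < (LINT \<theta>:\<Theta>|lborel. \<pi> \<theta> * p x \<theta>) \<and>
                    (\<forall>\<theta>\<in>\<Theta>. f x \<theta> = \<pi> \<theta> * p x \<theta> / (LINT \<theta>':\<Theta>|lborel. \<pi> \<theta>' * p x \<theta>'))))"
    (is "?commute \<longleftrightarrow> (\<exists>\<pi>. ?prior \<pi>)")
proof
  assume ?commute
  show "\<exists>\<pi>. ?prior \<pi>"
  proof (cases "X = {}")
    case True
    then show ?thesis by (intro exI[of _ "\<lambda>_. 0"]) simp
  next
    case False
    then obtain x0 where "x0 \<in> X" by blast
    have "?prior (\<lambda>\<theta>. f x0 \<theta> / p x0 \<theta>)"
      using bayes_update_commute_imp_proportional[OF p_pos f_dens denom_pos \<open>?commute\<close> \<open>x0 \<in> X\<close>]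
      by (rule conjI)
    then show ?thesis by (rule exI[of _ "\<lambda>\<theta>. f x0 \<theta> / p x0 \<theta>"])
  qed
next
  assume "\<exists>\<pi>. ?prior \<pi>"
  then obtain \<pi> where prior: "?prior \<pi>" ..
  show ?commute
  proof (intro ballI)
    fix x1 x2 \<theta> assume "x1 \<in> X" "x2 \<in> X" "\<theta> \<in> \<Theta>"
    have "bayes_update \<Theta> f p x1 x2 \<theta> =
            \<pi> \<theta> * p x1 \<theta> * p x2 \<theta> / (LINT \<theta>':\<Theta>|lborel. \<pi> \<theta>' * p x1 \<theta>' * p x2 \<theta>')"
      using prior \<open>x1 \<in> X\<close> \<open>\<theta> \<in> \<Theta>\<close> by (intro bayes_update_proportional) simp_all
    also have "\<dots> = \<pi> \<theta> * p x2 \<theta> * p x1 \<theta> / (LINT \<theta>':\<Theta>|lborel. \<pi> \<theta>' * p x2 \<theta>' * p x1 \<theta>')"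
      by (simp only: mult.assoc mult.commute[of "p x1 _" "p x2 _"])
    also have "\<dots> = bayes_update \<Theta> f p x2 x1 \<theta>"
      using prior \<open>x2 \<in> X\<close> \<open>\<theta> \<in> \<Theta>\<close> by (intro bayes_update_proportional[symmetric]) simp_all
    finally show "bayes_update \<Theta> f p x1 x2 \<theta> = bayes_update \<Theta> f p x2 x1 \<theta>" .
  qed
qed

end
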